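(* Assume the standing hypotheses described in the context. Let $(\bar S,\bar w^0,\bar w,\bar\alpha,\bar y^0,\bar y,\bar\beta)$ be a canonical extremal for the space-time problem with multiplier $(p_0,p,\pi,\lambda)$. If $\pi=0$ and $\lambda\,\ell^e(\bar y(s),0,\pm\mathbf e_i,a)=0$ for all $s\in[0,\bar S]$, all $i=1,\dots,m_1$ (and all $a\in A$), then $p(s)\cdot g_i(\bar y(s))=0$ for all $s\in[0,\bar S]$ and all $i=1,\dots,m_1$.
   Context: Let $n,m,q\ge1$, $m=m_1+m_2$, $\mathbf e_i$ the $i$-th canonical basis vector of $\mathbb{R}^m$. Standing hypotheses: $\mathfrak T\subset\mathbb{R}_+\times\mathbb{R}^n$ closed target; $A\subset\mathbb{R}^q$ compact; $\mathcal C=\mathcal C_1\times\mathcal C_2\subseteq\mathbb{R}^m$ with $\mathcal C_1\subseteq\mathbb{R}^{m_1}$ a closed cone containing the lines $\mathbb{R}\mathbf e_i$, $i\le m_1$, and $\mathcal C_2\subseteq\mathbb{R}^{m_2}$ a closed cone containing no line; $f:\mathbb{R}^n\times A\to\mathbb{R}^n$ continuous with continuous $x$-partials; $g_1,\dots,g_m:\mathbb{R}^n\to\mathbb{R}^n$ of class $C^1$; $\ell(x,u,a)=\ell_0(x,a)+\ell_1(x,u)$ with $\ell_0$ and the recession function $\hat\ell_1(x,w^0,w):=\lim_{r\to w^0}r\ell_1(x,w/r)$ (on $\mathbb{R}^n\times\mathbb{R}_+\times\mathcal C$) continuous with continuous $x$-partials; $\Psi$ of class $C^1$; $K\in(0,+\infty]$,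 $\check x\in\mathbb{R}^n$; $\ell^e(x,w^0,w,a):=\ell_0(x,a)w^0+\hat\ell_1(x,w^0,w)$. A space-time process is $(S,w^0,w,\alpha,y^0,y,\beta)$ with $S>0$, $(w^0,w,\alpha)\in L^\infty([0,S],\mathbb{R}_+\times\mathcal C\times A)$, $\operatorname{ess\,inf}(w^0+|w|)>0$, and $(y^0,y,\beta)$ solving $\dot y^0=w^0$, $\dot y=f(y,\alpha)w^0+\sum_i g_i(y)w^i$, $\dot\beta=|w|$, $(y^0,y,\beta)(0)=(0,\check x,0)$; canonical if $w^0+|w|=1$ a.e. Hamiltonians: $W=\{(w^0,w)\in\mathbb{R}_+\times\mathcal C:w^0+|w|=1\}$; $H(x,p_0,p,\pi,\lambda,w^0,w,a)=p_0w^0+p\cdot(f(x,a)w^0+\sum_i g_i(x)w^i)+\pi|w|-\lambda\ell^e(x,w^0,w,a)$; $\mathbf H=\max_{W\times A}H$. Extremal with multiplier: a space-time process with, for some Boltyanski approximating cone $\Gamma$ of $\mathfrak T$ at $(\bar y^0,\bar y)(\bar S)$, some $(p_0,p,\pi,\lambda)\in\mathbb{R}\times AC([0,\bar S],\mathbb{R}^n)\times(-\infty,0]\times[0,\infty)$ with $(p_0,p,\lambda)\ne(0,0,0)$; $(p_0,p(\bar S))\in-\lambda\nabla_{(t,x)}\Psi((\bar y^0,\bar y)(\bar S))-\Gamma^\perp$, and $\pi=0$ if $\bar\beta(\bar S)<K$; $\dot p=-\partial_xH(\bar y,p_0,p,\pi,\lambda,\bar w^0,\bar w,\bar\alpha)$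 a.e.; $H(\bar y,p_0,p,\pi,\lambda,\bar w^0,\bar w,\bar\alpha)=\mathbf H(\bar y,p_0,p,\pi,\lambda)$ a.e.; $\mathbf H(\bar y(s),p_0,p(s),\pi,\lambda)=0$ for all $s$. (Boltyanski approximating cone of $Z\subseteq\mathbb{R}^N$ at $z$: a convex cone $LC$ with $C\subset\mathbb{R}^M$ a convex cone, $L$ linear, and a continuous $F:V\cap C\to Z$, $V$ a neighborhood of $0$, $F(v)=z+Lv+o(|v|)$; $X^\perp=\{p:p\cdot x\le0\ \forall x\in X\}$.) *)

theory Defs
  imports "HOL-Analysis.Analysis"
begin

text \<open>State space: a Euclidean space 'n (= R^n); control parameters a in a
Euclidean space 'q (= R^q); impulsive controls w in real^'m (= R^m), whose coordinates are
indexed by the finite type 'm; the set I1 of indices plays the role of {1,..,m1}, its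
complement the role of {m1+1,..,m}.  e_i is axis i 1, |w| is the Euclidean norm.\<close>

definition C1_map :: "('a::euclidean_space \<Rightarrow> 'b::real_normed_vector) \<Rightarrow> bool" where
  "C1_map F \<longleftrightarrow> (\<exists>DF. (\<forall>x. (F has_derivative blinfun_apply (DF x)) (at x)) \<and> continuous_on UNIV DF)"

definition cont_x_partials ::
  "('x::euclidean_space \<Rightarrow> 'p::topological_space \<Rightarrow> 'b::real_normed_vector) \<Rightarrow> 'p set \<Rightarrow> bool" where
  "cont_x_partials F P \<longleftrightarrow>
     continuous_on (UNIV \<times> P) (\<lambda>(x,p). F x p) \<and>
     (\<exists>D. (\<forall>x. \<forall>p\<in>P. ((\<lambda>x. F x p) has_derivative blinfun_apply (D x p)) (at x)) \<and>
          continuous_on (UNIV \<times> P) (\<lambda>(x,p). D x p))"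

definition supp_on :: "'m set \<Rightarrow> (real^'m) set" where
  "supp_on I = {v. \<forall>j. j \<notin> I \<longrightarrow> v $ j = 0}"

text \<open>The product cone C = C1 x C2, embedded in R^m.\<close>
definition prod_cone :: "(real^'m) set \<Rightarrow> (real^'m) set \<Rightarrow> (real^'m) set" where
  "prod_cone C1 C2 = {u + v |u v. u \<in> C1 \<and> v \<in> C2}"

definition polar :: "'a::real_inner set \<Rightarrow> 'a set" where
  "polar X = {p. \<forall>x\<in>X. p \<bullet> x \<le> 0}"

text \<open>Boltyanski approximating cone of Z at z; the type 'M is the space R^M of the cone C.\<close>
definition boltyanski_cone ::
  "'M::euclidean_space itself \<Rightarrow> 'a::euclidean_space set \<Rightarrow> 'a \<Rightarrow> 'a set \<Rightarrow> bool" where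
  "boltyanski_cone TYPE('M) Z z \<Gamma> \<longleftrightarrow>
     (\<exists>(C::'M set) L F V. convex_cone C \<and> linear L \<and> open V \<and> 0 \<in> V \<and>
        continuous_on (V \<inter> C) F \<and> F ` (V \<inter> C) \<subseteq> Z \<and> F 0 = z \<and>
        ((\<lambda>v. norm (F v - z - L v) / norm v) \<longlongrightarrow> 0) (at 0 within (V \<inter> C)) \<and>
        \<Gamma> = L ` C)"

definition Linf_on :: "real \<Rightarrow> (real \<Rightarrow> 'b::{real_normed_vector,second_countable_topology}) \<Rightarrow> bool" where
  "Linf_on S u \<longleftrightarrow> u \<in> borel_measurable (lebesgue_on {0..S}) \<and>
     (\<exists>B. AE s in lebesgue_on {0..S}. norm (u s) \<le> B)"

text \<open>z is absolutely continuous on [0,S] with derivative v a.e.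
  (equivalently: v is integrable and z is its indefinite integral).\<close>
definition AC_deriv :: "real \<Rightarrow> (real \<Rightarrow> 'b::euclidean_space) \<Rightarrow> (real \<Rightarrow> 'b) \<Rightarrow> bool" where
  "AC_deriv S z v \<longleftrightarrow> v absolutely_integrable_on {0..S} \<and>
     (\<forall>t\<in>{0..S}. (v has_integral (z t - z 0)) {0..t})"

definition ell_e ::
  "('n \<Rightarrow> 'q \<Rightarrow> real) \<Rightarrow> ('n \<Rightarrow> real \<Rightarrow> real^'m \<Rightarrow> real) \<Rightarrow> 'n \<Rightarrow> real \<Rightarrow> real^'m \<Rightarrow> 'q \<Rightarrow> real" where
  "ell_e l0 hl1 x w0 w a = l0 x a * w0 + hl1 x w0 w"

definition dyn ::
  "('n::real_vector \<Rightarrow> 'q \<Rightarrow> 'n) \<Rightarrow> ('m::finite \<Rightarrow> 'n \<Rightarrow> 'n) \<Rightarrow> 'n \<Rightarrow> real \<Rightarrow> real^'m \<Rightarrow> 'q \<Rightarrow> 'n" where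
  "dyn f g x w0 w a = w0 *\<^sub>R f x a + (\<Sum>i\<in>UNIV. (w $ i) *\<^sub>R g i x)"

definition Ham ::
  "('n::real_inner \<Rightarrow> 'q \<Rightarrow> 'n) \<Rightarrow> ('m::finite \<Rightarrow> 'n \<Rightarrow> 'n) \<Rightarrow> ('n \<Rightarrow> 'q \<Rightarrow> real) \<Rightarrow>
   ('n \<Rightarrow> real \<Rightarrow> real^'m \<Rightarrow> real) \<Rightarrow>
   'n \<Rightarrow> real \<Rightarrow> 'n \<Rightarrow> real \<Rightarrow> real \<Rightarrow> real \<Rightarrow> real^'m \<Rightarrow> 'q \<Rightarrow> real" where
  "Ham f g l0 hl1 x p0 p \<pi> lam w0 w a =
     p0 * w0 + p \<bullet> dyn f g x w0 w a + \<pi> * norm w - lam * ell_e l0 hl1 x w0 w a"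

definition Wset :: "(real^'m) set \<Rightarrow> (real \<times> (real^'m)) set" where
  "Wset C = {(w0, w). w0 \<ge> 0 \<and> w \<in> C \<and> w0 + norm w = 1}"

definition Hmax ::
  "('n::real_inner \<Rightarrow> 'q \<Rightarrow> 'n) \<Rightarrow> ('m::finite \<Rightarrow> 'n \<Rightarrow> 'n) \<Rightarrow> ('n \<Rightarrow> 'q \<Rightarrow> real) \<Rightarrow>
   ('n \<Rightarrow> real \<Rightarrow> real^'m \<Rightarrow> real) \<Rightarrow> (real^'m) set \<Rightarrow> 'q set \<Rightarrow>
   'n \<Rightarrow> real \<Rightarrow> 'n \<Rightarrow> real \<Rightarrow> real \<Rightarrow> real" where
  "Hmax f g l0 hl1 C A x p0 p \<pi> lam =
     (SUP ((w0, w), a) \<in> Wset C \<times> A. Ham f g l0 hl1 x p0 p \<pi> lam w0 w a)"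

definition st_process ::
  "('n::euclidean_space \<Rightarrow> 'q::euclidean_space \<Rightarrow> 'n) \<Rightarrow> ('m::finite \<Rightarrow> 'n \<Rightarrow> 'n) \<Rightarrow>
   (real^'m) set \<Rightarrow> 'q set \<Rightarrow> 'n \<Rightarrow>
   real \<Rightarrow> (real \<Rightarrow> real) \<Rightarrow> (real \<Rightarrow> real^'m) \<Rightarrow> (real \<Rightarrow> 'q) \<Rightarrow>
   (real \<Rightarrow> real) \<Rightarrow> (real \<Rightarrow> 'n) \<Rightarrow> (real \<Rightarrow> real) \<Rightarrow> bool" where
  "st_process f g C A xc S w0 w \<alpha> y0 y \<beta> \<longleftrightarrow>
     S > 0 \<and> Linf_on S w0 \<and> Linf_on S w \<and> Linf_on S \<alpha> \<and>
     (AE s in lebesgue_on {0..S}. w0 s \<ge> 0 \<and> w s \<in> C \<and> \<alpha> s \<in> A) \<and>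
     (\<exists>c>0. AE s in lebesgue_on {0..S}. c \<le> w0 s + norm (w s)) \<and>
     y0 0 = 0 \<and> y 0 = xc \<and> \<beta> 0 = 0 \<and>
     AC_deriv S y0 w0 \<and>
     AC_deriv S y (\<lambda>s. dyn f g (y s) (w0 s) (w s) (\<alpha> s)) \<and>
     AC_deriv S \<beta> (\<lambda>s. norm (w s))"

definition canonical :: "real \<Rightarrow> (real \<Rightarrow> real) \<Rightarrow> (real \<Rightarrow> real^'m) \<Rightarrow> bool" where
  "canonical S w0 w \<longleftrightarrow> (AE s in lebesgue_on {0..S}. w0 s + norm (w s) = 1)"

definition extremal_mult ::
  "'M::euclidean_space itself \<Rightarrow>
   ('n::euclidean_space \<Rightarrow> 'q::euclidean_space \<Rightarrow> 'n) \<Rightarrow> ('m::finite \<Rightarrow> 'n \<Rightarrow> 'n) \<Rightarrow>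
   ('n \<Rightarrow> 'q \<Rightarrow> real) \<Rightarrow> ('n \<Rightarrow> real \<Rightarrow> real^'m \<Rightarrow> real) \<Rightarrow>
   (real^'m) set \<Rightarrow> 'q set \<Rightarrow> 'n \<Rightarrow> (real \<times> 'n) set \<Rightarrow> (real \<times> 'n \<Rightarrow> real) \<Rightarrow> ereal \<Rightarrow>
   real \<Rightarrow> (real \<Rightarrow> real) \<Rightarrow> (real \<Rightarrow> real^'m) \<Rightarrow> (real \<Rightarrow> 'q) \<Rightarrow>
   (real \<Rightarrow> real) \<Rightarrow> (real \<Rightarrow> 'n) \<Rightarrow> (real \<Rightarrow> real) \<Rightarrow>
   real \<Rightarrow> (real \<Rightarrow> 'n) \<Rightarrow> real \<Rightarrow> real \<Rightarrow> bool" where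
  "extremal_mult TYPE('M) f g l0 hl1 C A xc T \<Psi> K S w0 w \<alpha> y0 y \<beta> p0 p \<pi> lam \<longleftrightarrow>
     st_process f g C A xc S w0 w \<alpha> y0 y \<beta> \<and>
     \<pi> \<le> 0 \<and> lam \<ge> 0 \<and> (p0 \<noteq> 0 \<or> (\<exists>s\<in>{0..S}. p s \<noteq> 0) \<or> lam \<noteq> 0) \<and>
     (\<exists>\<Gamma>. boltyanski_cone TYPE('M) T (y0 S, y S) \<Gamma> \<and>
        (\<exists>D\<Psi>. GDERIV \<Psi> (y0 S, y S) :> D\<Psi> \<and>
           (\<exists>\<gamma>\<in>polar \<Gamma>. (p0, p S) = - (lam *\<^sub>R D\<Psi>) - \<gamma>))) \<and>
     (ereal (\<beta> S) < K \<longrightarrow> \<pi> = 0) \<and>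
     (\<exists>q. AC_deriv S p q \<and>
        (AE s in lebesgue_on {0..S}.
           GDERIV (\<lambda>x. Ham f g l0 hl1 x p0 (p s) \<pi> lam (w0 s) (w s) (\<alpha> s)) (y s) :> - q s)) \<and>
     (AE s in lebesgue_on {0..S}.
        Ham f g l0 hl1 (y s) p0 (p s) \<pi> lam (w0 s) (w s) (\<alpha> s) = Hmax f g l0 hl1 C A (y s) p0 (p s) \<pi> lam) \<and>
     (\<forall>s\<in>{0..S}. Hmax f g l0 hl1 C A (y s) p0 (p s) \<pi> lam = 0)"

end

theory Submission
  imports Defs
begin

text \<open>Since \<open>\<pi> = 0\<close>, the Hamiltonian at the purely impulsive direction \<open>(0, r e\<^sub>i)\<close> reduces to
  \<open>r p \<bullet> g\<^sub>i(x)\<close> up to the cost term, which vanishes by hypothesis. Both \<open>e\<^sub>i\<close> and \<open>-e\<^sub>i\<close> lie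
  in \<open>W\<close>, and the maximized Hamiltonian is \<open>0\<close> along the extremal, so \<open>\<plusminus>p \<bullet> g\<^sub>i \<le> 0\<close>.
  The only analytic point is that the maximum over \<open>W \<times> A\<close> is attained, i.e. the real supremum
  in \<open>Hmax\<close> is not a junk value: \<open>W \<times> A\<close> is compact and the Hamiltonian is continuous on it.\<close>

lemma AE_lebesgue_on_interval_ex:
  fixes a b :: real
  assumes "a < b" and "AE s in lebesgue_on {a..b}. P s"
  shows "\<exists>s. P s"
proof (rule ccontr)
  assume "\<nexists>s. P s"
  then have "ae_filter (lebesgue_on {a..b}) = bot"
    using assms(2) by (simp add: trivial_limit_def)
  then have "emeasure (lebesgue_on {a..b}) (space (lebesgue_on {a..b})) = 0"
    using ae_filter_eq_bot_iff by blast
  moreover have "emeasure (lebesgue_on {a..b}) (space (lebesgue_on {a..b})) = ennreal (b - a)"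
    using \<open>a < b\<close> by (simp add: emeasure_restrict_space)
  ultimately show False using \<open>a < b\<close> by simp
qed

lemma cont_x_partials_continuous_on_slice:
  assumes "cont_x_partials F P"
  shows "continuous_on P (F x)"
proof -
  have "continuous_on (UNIV \<times> P) (\<lambda>(x, p). F x p)"
    using assms unfolding cont_x_partials_def by blast
  then have "continuous_on P ((\<lambda>(x, p). F x p) \<circ> Pair x)"
    by (intro continuous_on_compose continuous_intros) (auto elim: continuous_on_subset)
  then show ?thesis by (simp add: o_def)
qed

lemma closed_prod_cone:
  fixes C1 C2 :: "(real^'m) set"
  assumes "closed C1" "C1 \<subseteq> supp_on I" "closed C2" "C2 \<subseteq> supp_on (- I)"
  shows "closed (prod_cone C1 C2)"
proof -
  define P1 :: "real^'m \<Rightarrow> real^'m" where "P1 z = (\<chi> j. if j \<in> I then z $ j else 0)" for z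
  define P2 :: "real^'m \<Rightarrow> real^'m" where "P2 z = (\<chi> j. if j \<in> I then 0 else z $ j)" for z
  have "prod_cone C1 C2 = {z. P1 z \<in> C1 \<and> P2 z \<in> C2}"
  proof safe
    fix z assume "z \<in> prod_cone C1 C2"
    then obtain u v where z: "z = u + v" "u \<in> C1" "v \<in> C2" unfolding prod_cone_def by blast
    then have "P1 z = u" "P2 z = v"
      using assms(2,4) unfolding P1_def P2_def supp_on_def by (auto simp: vec_eq_iff)
    with z show "P1 z \<in> C1" "P2 z \<in> C2" by auto
  next
    fix z assume "P1 z \<in> C1" "P2 z \<in> C2"
    moreover have "z = P1 z + P2 z" unfolding P1_def P2_def by (auto simp: vec_eq_iff)
    ultimately show "z \<in> prod_cone C1 C2" unfolding prod_cone_def by blast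
  qed
  then have decomp: "prod_cone C1 C2 = P1 -` C1 \<inter> P2 -` C2" by auto
  have "linear P1" "linear P2"
    unfolding P1_def P2_def by (auto intro!: linearI simp: vec_eq_iff)
  then have "continuous_on UNIV P1" "continuous_on UNIV P2"
    by (simp_all add: linear_continuous_on linear_conv_bounded_linear)
  then show ?thesis
    unfolding decomp using assms(1,3) by (intro closed_Int closed_vimage)
qed

lemma compact_Wset:
  assumes "closed C"
  shows "compact (Wset C)"
proof (subst compact_eq_bounded_closed, rule conjI)
  have "Wset C = {z. fst z \<ge> 0} \<inter> snd -` C \<inter> {z. fst z + norm (snd z) = 1}"
    unfolding Wset_def by auto
  then show "closed (Wset C)"
    using assms by (auto intro!: closed_Int closed_vimage_snd closed_Collect_le closed_Collect_eq
                                 continuous_intros)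
  show "bounded (Wset C)" unfolding bounded_iff
  proof (intro exI[of _ 2] ballI)
    fix z assume "z \<in> Wset C"
    then obtain v0 v where z: "z = (v0, v)" "v0 \<ge> 0" "v0 + norm v = 1" unfolding Wset_def by auto
    have "norm z \<le> norm v0 + norm v" unfolding z by (rule norm_Pair_le)
    with z show "norm z \<le> 2" by simp
  qed
qed

lemma continuous_on_Ham:
  assumes "continuous_on A (f x)" "continuous_on A (l0 x)"
    and "continuous_on {(v0, v). v0 \<ge> 0 \<and> v \<in> C} (\<lambda>(v0, v). hl1 x v0 v)"
  shows "continuous_on (Wset C \<times> A) (\<lambda>((v0, v), a). Ham f g l0 hl1 x p0 p \<pi> lam v0 v a)"
proof -
  have "continuous_on (Wset C \<times> A) (f x \<circ> snd)" "continuous_on (Wset C \<times> A) (l0 x \<circ> snd)"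
    by (intro continuous_on_compose continuous_intros continuous_on_subset[OF assms(1)]
          continuous_on_subset[OF assms(2)]; force)+
  moreover have "continuous_on (Wset C \<times> A) ((\<lambda>(v0, v). hl1 x v0 v) \<circ> fst)"
    by (intro continuous_on_compose continuous_intros continuous_on_subset[OF assms(3)])
       (auto simp: Wset_def)
  ultimately show ?thesis
    unfolding Ham_def dyn_def ell_e_def split_beta o_def by (intro continuous_intros)
qed

lemma Ham_le_Hmax:
  assumes "compact A" "closed C"
    and "continuous_on A (f x)" "continuous_on A (l0 x)"
    and "continuous_on {(v0, v). v0 \<ge> 0 \<and> v \<in> C} (\<lambda>(v0, v). hl1 x v0 v)"
    and "(w0, w) \<in> Wset C" "a \<in> A"
  shows "Ham f g l0 hl1 x p0 p \<pi> lam w0 w a \<le> Hmax f g l0 hl1 C A x p0 p \<pi> lam"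
proof -
  let ?H = "\<lambda>((v0, v), a). Ham f g l0 hl1 x p0 p \<pi> lam v0 v a"
  have "compact (?H ` (Wset C \<times> A))"
    using assms by (intro compact_continuous_image continuous_on_Ham compact_Times compact_Wset)
  then have "bdd_above (?H ` (Wset C \<times> A))"
    by (intro bounded_imp_bdd_above compact_imp_bounded)
  then have "?H ((w0, w), a) \<le> Sup (?H ` (Wset C \<times> A))"
    using assms(6,7) by (intro cSUP_upper) auto
  then show ?thesis unfolding Hmax_def by simp
qed

lemma dyn_impulse_axis:
  "dyn f g x 0 (r *\<^sub>R axis i 1) a = r *\<^sub>R g i x"
proof -
  have "((r *\<^sub>R axis i 1) $ j) *\<^sub>R g j x = (if j = i then r *\<^sub>R g i x else 0)" for j
    by (simp add: axis_def)
  then show ?thesis unfolding dyn_def by simp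
qed

lemma Ham_impulse_axis:
  "Ham f g l0 hl1 x p0 p 0 lam 0 (r *\<^sub>R axis i 1) a
     = r * (p \<bullet> g i x) - lam * ell_e l0 hl1 x 0 (r *\<^sub>R axis i 1) a"
  unfolding Ham_def dyn_impulse_axis by simp

lemma axis_line_in_Wset:
  assumes "\<forall>r::real. r *\<^sub>R axis i 1 \<in> C1" "cone C2" "C2 \<noteq> {}" "\<bar>r\<bar> = 1"
  shows "(0, r *\<^sub>R axis i 1) \<in> Wset (prod_cone C1 C2)"
proof -
  have "0 \<in> C2" using assms(2,3) unfolding cone_def by fastforce
  then have "r *\<^sub>R axis i 1 + 0 \<in> prod_cone C1 C2"
    using assms(1) unfolding prod_cone_def by blast
  with assms(4) show ?thesis unfolding Wset_def by simp
qed

theorem mainTheorem3: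
  fixes T :: "(real \<times> 'n::euclidean_space) set"
    and A :: "'q::euclidean_space set"
    and I1 :: "'m::finite set"
    and C1 C2 :: "(real^'m) set"
    and f :: "'n \<Rightarrow> 'q \<Rightarrow> 'n"
    and g :: "'m \<Rightarrow> 'n \<Rightarrow> 'n"
    and l0 :: "'n \<Rightarrow> 'q \<Rightarrow> real"
    and l1 :: "'n \<Rightarrow> real^'m \<Rightarrow> real"
    and hl1 :: "'n \<Rightarrow> real \<Rightarrow> real^'m \<Rightarrow> real"
    and \<Psi> :: "real \<times> 'n \<Rightarrow> real"
    and K :: ereal
    and xc :: 'n
    and S :: real and w0 :: "real \<Rightarrow> real" and w :: "real \<Rightarrow> real^'m" and \<alpha> :: "real \<Rightarrow> 'q"
    and y0 :: "real \<Rightarrow> real" and y :: "real \<Rightarrow> 'n" and \<beta> :: "real \<Rightarrow> real"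
    and p0 :: real and p :: "real \<Rightarrow> 'n" and \<pi> :: real and lam :: real
  assumes T_closed: "closed T" and T_pos: "T \<subseteq> {z. fst z \<ge> 0}"
    and A_compact: "compact A"
    and C1_sub: "C1 \<subseteq> supp_on I1" and C1_closed: "closed C1" and C1_cone: "cone C1" and C1_ne: "C1 \<noteq> {}"
    and C1_lines: "\<forall>i\<in>I1. \<forall>r::real. r *\<^sub>R axis i 1 \<in> C1"
    and C2_sub: "C2 \<subseteq> supp_on (- I1)" and C2_closed: "closed C2" and C2_cone: "cone C2" and C2_ne: "C2 \<noteq> {}"
    and C2_noline: "\<forall>v. v \<noteq> 0 \<longrightarrow> \<not> (\<forall>r::real. r *\<^sub>R v \<in> C2)"
    and f_reg: "cont_x_partials f A"
    and g_C1: "\<forall>i. C1_map (g i)"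
    and l0_reg: "cont_x_partials l0 A"
    and hl1_lim: "\<forall>x. \<forall>v0\<ge>0. \<forall>v\<in>prod_cone C1 C2.
       ((\<lambda>r. r * l1 x (inverse r *\<^sub>R v)) \<longlongrightarrow> hl1 x v0 v) (at v0 within {0<..})"
    and hl1_reg: "cont_x_partials (\<lambda>x (v0, v). hl1 x v0 v) {(v0, v). v0 \<ge> 0 \<and> v \<in> prod_cone C1 C2}"
    and Psi_C1: "C1_map \<Psi>"
    and K_pos: "K > 0"
    and extremal: "extremal_mult TYPE('M::euclidean_space) f g l0 hl1 (prod_cone C1 C2) A xc T \<Psi> K
                     S w0 w \<alpha> y0 y \<beta> p0 p \<pi> lam"
    and canon: "canonical S w0 w"
    and pi0: "\<pi> = 0"
    and ell_zero: "\<forall>s\<in>{0..S}. \<forall>i\<in>I1. \<forall>a\<in>A.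
       lam * ell_e l0 hl1 (y s) 0 (axis i 1) a = 0 \<and> lam * ell_e l0 hl1 (y s) 0 (- axis i 1) a = 0"
  shows "\<forall>s\<in>{0..S}. \<forall>i\<in>I1. p s \<bullet> g i (y s) = 0"
proof (intro ballI)
  fix s i assume s: "s \<in> {0..S}" and i: "i \<in> I1"
  let ?C = "prod_cone C1 C2"
  have process: "st_process f g ?C A xc S w0 w \<alpha> y0 y \<beta>"
    and Hmax_zero: "Hmax f g l0 hl1 ?C A (y s) p0 (p s) \<pi> lam = 0"
    using extremal s unfolding extremal_mult_def by blast+
  have "AE t in lebesgue_on {0..S}. \<alpha> t \<in> A" and "0 < S"
    using process unfolding st_process_def by (auto elim: AE_mp)
  then obtain a where a: "a \<in> A" using AE_lebesgue_on_interval_ex by blast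
  have Ham_le_0: "r * (p s \<bullet> g i (y s)) \<le> 0"
    if "\<bar>r\<bar> = 1" "lam * ell_e l0 hl1 (y s) 0 (r *\<^sub>R axis i 1) a = 0" for r :: real
  proof -
    have "Ham f g l0 hl1 (y s) p0 (p s) \<pi> lam 0 (r *\<^sub>R axis i 1) a
            \<le> Hmax f g l0 hl1 ?C A (y s) p0 (p s) \<pi> lam"
      by (rule Ham_le_Hmax[OF A_compact closed_prod_cone[OF C1_closed C1_sub C2_closed C2_sub]
            cont_x_partials_continuous_on_slice[OF f_reg] cont_x_partials_continuous_on_slice[OF l0_reg]
            cont_x_partials_continuous_on_slice[OF hl1_reg]
            axis_line_in_Wset[OF bspec[OF C1_lines i] C2_cone C2_ne that(1)] a])
    with that(2) Hmax_zero pi0 show ?thesis by (auto simp: Ham_impulse_axis)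
  qed
  have "p s \<bullet> g i (y s) \<le> 0" "- (p s \<bullet> g i (y s)) \<le> 0"
    using Ham_le_0[of 1] Ham_le_0[of "-1"] ell_zero s i a by auto
  then show "p s \<bullet> g i (y s) = 0" by simp
qed

end
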